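(* Let $1\leq l<k$ be integers and let $\mathcal{F}$ be a set of $l$-hypergraphs each of which contains two disjoint edges. Then there exists a set $\mathcal{F}'$ of $k$-hypergraphs with $ex(n+k-l,\mathcal{F}')=ex(n,\mathcal{F})$ for all $n$.
   Context: A $k$-hypergraph is a set of vertices together with a collection of $k$-element subsets of the vertices (edges). A hypergraph $X$ contains $G$ as a subgraph if there is an injective map from the vertices of $G$ to those of $X$ mapping edges to edges. For a family $\mathcal{F}$ of hypergraphs of uniformity $l$, $ex(n,\mathcal{F})$ is the maximum number of edges of an $l$-hypergraph on $n$ vertices containing no member of $\mathcal{F}$ as a subgraph. *)

theory Defs
  imports Main
begin

type_synonym 'a hgraph = "'a set \<times> 'a set set"

definition is_hypergraph :: "nat \<Rightarrow> 'a hgraph \<Rightarrow> bool" where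
  "is_hypergraph k G \<longleftrightarrow> finite (fst G) \<and> (\<forall>e\<in>snd G. e \<subseteq> fst G \<and> card e = k)"

definition contains :: "'a hgraph \<Rightarrow> 'b hgraph \<Rightarrow> bool" where
  "contains X G \<longleftrightarrow> (\<exists>f. inj_on f (fst G) \<and> f ` fst G \<subseteq> fst X \<and> (\<forall>e\<in>snd G. f ` e \<in> snd X))"

text \<open>ex n l F: maximum number of edges of an l-hypergraph on n vertices containing no
  member of F (vertex sets taken inside nat, which loses no generality up to isomorphism).\<close>

definition ex :: "nat \<Rightarrow> nat \<Rightarrow> nat hgraph set \<Rightarrow> nat" where
  "ex n l F = Sup {card (snd X) | X :: nat hgraph. is_hypergraph l X \<and> card (fst X) = n \<and> (\<forall>G\<in>F. \<not> contains X G)}"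

end

theory Submission
  imports Defs
begin

text \<open>Let a \<open>free cone\<close> be a k-hypergraph all of whose edges contain a common
  (k-l)-set S such that the link, obtained by deleting S, is F-free. Take F' to be all
  k-hypergraphs that are not free cones. Since every member of F has an edge, being a free
  cone is inherited by subgraphs (pull S back along the embedding), so a k-hypergraph is
  F'-free exactly when it is a free cone. Taking the link and coning over k-l fresh
  vertices are mutually inverse, preserve the number of edges, and shift the number of
  vertices by k-l, so both extremal numbers are suprema of the same set.\<close>

definition hg_link :: "'a set \<Rightarrow> 'a hgraph \<Rightarrow> 'a hgraph" where
  "hg_link S Y = (fst Y - S, (\<lambda>e. e - S) ` snd Y)"

definition hg_cone :: "'a set \<Rightarrow> 'a hgraph \<Rightarrow> 'a hgraph" where
  "hg_cone S X = (fst X \<union> S, (\<lambda>e. e \<union> S) ` snd X)"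

definition free_cone :: "nat \<Rightarrow> nat \<Rightarrow> 'b hgraph set \<Rightarrow> 'a hgraph \<Rightarrow> bool" where
  "free_cone k l F Y \<longleftrightarrow> (\<exists>S. finite S \<and> card S = k - l \<and> (\<forall>e\<in>snd Y. S \<subseteq> e)
      \<and> (\<forall>G\<in>F. \<not> contains (hg_link S Y) G))"

lemma contains_refl: "contains X X"
  unfolding contains_def by (rule exI[of _ id]) auto

lemma contains_trans:
  assumes "contains X Y" and "contains Y Z"
  shows "contains X Z"
proof -
  obtain f where f: "inj_on f (fst Y)" "f ` fst Y \<subseteq> fst X" "\<forall>e\<in>snd Y. f ` e \<in> snd X"
    using assms(1) by (auto simp: contains_def)
  obtain g where g: "inj_on g (fst Z)" "g ` fst Z \<subseteq> fst Y" "\<forall>e\<in>snd Z. g ` e \<in> snd Y"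
    using assms(2) by (auto simp: contains_def)
  have "inj_on (f \<circ> g) (fst Z)"
    using comp_inj_on[OF g(1) inj_on_subset[OF f(1) g(2)]] .
  moreover have "(f \<circ> g) ` fst Z \<subseteq> fst X" using f(2) g(2) by auto
  moreover have "\<forall>e\<in>snd Z. (f \<circ> g) ` e \<in> snd X"
    using f(3) g(3) by (metis image_comp)
  ultimately show ?thesis unfolding contains_def by blast
qed

lemma not_contains_edgeless:
  assumes "snd H \<noteq> {}"
  shows "\<not> contains (V, {}) H"
  using assms by (auto simp: contains_def)

lemma contains_link_preimage:
  assumes f: "inj_on f (fst G)" "f ` fst G \<subseteq> fst Y" "\<forall>e\<in>snd G. f ` e \<in> snd Y"
    and edges: "\<forall>e\<in>snd G. e \<subseteq> fst G"
  shows "contains (hg_link S Y) (hg_link (fst G \<inter> f -` S) G)"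
proof -
  have "f ` (e - (fst G \<inter> f -` S)) = f ` e - S" if "e \<in> snd G" for e
    using edges that by blast
  then have "\<forall>e'\<in>snd (hg_link (fst G \<inter> f -` S) G). f ` e' \<in> snd (hg_link S Y)"
    using f(3) by (auto simp: hg_link_def)
  moreover have "inj_on f (fst (hg_link (fst G \<inter> f -` S) G))"
    using inj_on_subset[OF f(1)] by (simp add: hg_link_def)
  moreover have "f ` fst (hg_link (fst G \<inter> f -` S) G) \<subseteq> fst (hg_link S Y)"
    using f(2) by (auto simp: hg_link_def)
  ultimately show ?thesis unfolding contains_def by blast
qed

lemma is_hypergraph_link:
  assumes "is_hypergraph k Y" and "finite S" and "\<forall>e\<in>snd Y. S \<subseteq> e"
  shows "is_hypergraph (k - card S) (hg_link S Y)"
  using assms by (auto simp: is_hypergraph_def hg_link_def card_Diff_subset)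

lemma card_edges_link:
  assumes "\<forall>e\<in>snd Y. S \<subseteq> e"
  shows "card (snd (hg_link S Y)) = card (snd Y)"
proof -
  have "inj_on (\<lambda>e. e - S) (snd Y)"
    by (rule inj_onI) (use assms in blast)
  then show ?thesis by (simp add: hg_link_def card_image)
qed

lemma is_hypergraph_cone:
  assumes "is_hypergraph l X" and "finite S" and "fst X \<inter> S = {}"
  shows "is_hypergraph (l + card S) (hg_cone S X)"
  unfolding is_hypergraph_def hg_cone_def
proof (intro conjI ballI)
  show "finite (fst (fst X \<union> S, (\<lambda>e. e \<union> S) ` snd X))"
    using assms(1,2) by (simp add: is_hypergraph_def)
  fix e' assume "e' \<in> snd (fst X \<union> S, (\<lambda>e. e \<union> S) ` snd X)"
  then obtain e where e: "e \<in> snd X" "e' = e \<union> S" by auto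
  have "e \<subseteq> fst X" "card e = l" "finite e"
    using assms(1) e(1) finite_subset by (auto simp: is_hypergraph_def)
  moreover have "e \<inter> S = {}" using \<open>e \<subseteq> fst X\<close> assms(3) by blast
  ultimately show "e' \<subseteq> fst (fst X \<union> S, (\<lambda>e. e \<union> S) ` snd X)" "card e' = l + card S"
    using e(2) assms(2) by (auto simp: card_Un_disjoint)
qed

lemma card_edges_cone:
  assumes "is_hypergraph l X" and "fst X \<inter> S = {}"
  shows "card (snd (hg_cone S X)) = card (snd X)"
proof -
  have "inj_on (\<lambda>e. e \<union> S) (snd X)"
    by (rule inj_onI) (use assms in \<open>auto simp: is_hypergraph_def\<close>)
  then show ?thesis by (simp add: hg_cone_def card_image)
qed

lemma link_cone:
  assumes "is_hypergraph l X" and "fst X \<inter> S = {}"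
  shows "hg_link S (hg_cone S X) = X"
proof -
  have "(\<lambda>e. e - S) ` (\<lambda>e. e \<union> S) ` snd X = (\<lambda>e. e) ` snd X"
    unfolding image_image by (rule image_cong) (use assms in \<open>auto simp: is_hypergraph_def\<close>)
  moreover have "fst X \<union> S - S = fst X" using assms(2) by blast
  ultimately show ?thesis by (simp add: hg_link_def hg_cone_def prod_eq_iff)
qed

lemma fresh_finite_set:
  fixes V :: "nat set"
  assumes "finite V"
  obtains S where "finite S" "card S = m" "V \<inter> S = {}"
proof -
  have "infinite (UNIV - V)" using Diff_infinite_finite[OF assms infinite_UNIV_nat] .
  then obtain S where "finite S" "card S = m" "S \<subseteq> UNIV - V"
    using infinite_arbitrarily_large by metis
  then show thesis by (intro that) auto
qed

lemma free_cone_edgeless: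
  fixes G :: "nat hgraph"
  assumes "\<forall>H\<in>F. snd H \<noteq> {}" and "snd G = {}"
  shows "free_cone k l F G"
proof -
  have "hg_link {0..<k-l} G = (fst G - {0..<k-l}, {})"
    using assms(2) by (simp add: hg_link_def)
  then have "\<forall>H\<in>F. \<not> contains (hg_link {0..<k-l} G) H"
    using assms(1) not_contains_edgeless by metis
  then show ?thesis unfolding free_cone_def using assms(2) by (intro exI[of _ "{0..<k-l}"]) simp
qed

lemma free_cone_subgraph:
  fixes G :: "nat hgraph"
  assumes F: "\<forall>H\<in>F. snd H \<noteq> {}" and G: "is_hypergraph k G"
    and Y: "free_cone k l F Y" and YG: "contains Y G"
  shows "free_cone k l F G"
proof (cases "snd G = {}")
  case True
  with F show ?thesis by (rule free_cone_edgeless)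
next
  case False
  then obtain e0 where e0: "e0 \<in> snd G" by auto
  obtain S where S: "finite S" "card S = k - l" "\<forall>e\<in>snd Y. S \<subseteq> e"
      "\<forall>H\<in>F. \<not> contains (hg_link S Y) H"
    using Y by (auto simp: free_cone_def)
  obtain f where f: "inj_on f (fst G)" "f ` fst G \<subseteq> fst Y" "\<forall>e\<in>snd G. f ` e \<in> snd Y"
    using YG by (auto simp: contains_def)
  have edges: "\<forall>e\<in>snd G. e \<subseteq> fst G" and "finite (fst G)"
    using G by (auto simp: is_hypergraph_def)
  define S' where "S' = fst G \<inter> f -` S"
  have S_edges: "S \<subseteq> f ` e" if "e \<in> snd G" for e
    using bspec[OF S(3) bspec[OF f(3) that]] .
  have "S \<subseteq> f ` fst G" using S_edges[OF e0] edges e0 by blast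
  then have "f ` S' = S" unfolding S'_def by blast
  moreover have "inj_on f S'" unfolding S'_def using inj_on_subset[OF f(1)] by simp
  ultimately have "card S' = k - l" using card_image S(2) by metis
  moreover have "finite S'" using \<open>finite (fst G)\<close> unfolding S'_def by simp
  moreover have "S' \<subseteq> e" if e: "e \<in> snd G" for e
  proof
    fix x assume x: "x \<in> S'"
    then obtain y where "y \<in> e" "f x = f y" using S_edges[OF e] unfolding S'_def by blast
    moreover have "x \<in> fst G" "y \<in> fst G" using x \<open>y \<in> e\<close> edges e unfolding S'_def by auto
    ultimately show "x \<in> e" using inj_onD[OF f(1)] by metis
  qed
  moreover have "\<not> contains (hg_link S' G) H" if "H \<in> F" for H
  proof
    assume "contains (hg_link S' G) H"
    with contains_link_preimage[OF f edges] have "contains (hg_link S Y) H"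
      unfolding S'_def by (rule contains_trans)
    with S(4) that show False by blast
  qed
  ultimately show ?thesis unfolding free_cone_def by blast
qed

definition non_free_cones :: "nat \<Rightarrow> nat \<Rightarrow> 'b hgraph set \<Rightarrow> nat hgraph set" where
  "non_free_cones k l F = {Y. is_hypergraph k Y \<and> \<not> free_cone k l F Y}"

lemma non_free_cones_free_iff:
  fixes Y :: "nat hgraph"
  assumes "\<forall>H\<in>F. snd H \<noteq> {}" and "is_hypergraph k Y"
  shows "(\<forall>G\<in>non_free_cones k l F. \<not> contains Y G) \<longleftrightarrow> free_cone k l F Y"
proof
  assume free: "\<forall>G\<in>non_free_cones k l F. \<not> contains Y G"
  show "free_cone k l F Y"
  proof (rule ccontr)
    assume "\<not> free_cone k l F Y"
    with assms(2) have "Y \<in> non_free_cones k l F" by (simp add: non_free_cones_def)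
    with free have "\<not> contains Y Y" by (rule bspec)
    then show False using contains_refl by blast
  qed
next
  assume "free_cone k l F Y"
  then show "\<forall>G\<in>non_free_cones k l F. \<not> contains Y G"
    using free_cone_subgraph[OF assms(1)] unfolding non_free_cones_def by blast
qed

lemma link_of_free_cone:
  fixes Y :: "nat hgraph"
  assumes "l < k" and "\<forall>H\<in>F. snd H \<noteq> {}"
    and "is_hypergraph k Y" and "card (fst Y) = n + k - l" and "free_cone k l F Y"
  shows "\<exists>X :: nat hgraph. is_hypergraph l X \<and> card (fst X) = n \<and> (\<forall>G\<in>F. \<not> contains X G)
    \<and> card (snd X) = card (snd Y)"
proof (cases "snd Y = {}")
  case True
  \<comment> \<open>S need not lie inside an edgeless Y, so its link may have the wrong order\<close>
  have "\<forall>G\<in>F. \<not> contains ({0..<n}, {}) G" using assms(2) not_contains_edgeless by blast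
  with True show ?thesis
    by (intro exI[of _ "({0..<n}, {}) :: nat hgraph"]) (simp add: is_hypergraph_def)
next
  case False
  then obtain e0 where "e0 \<in> snd Y" by auto
  obtain S where S: "finite S" "card S = k - l" "\<forall>e\<in>snd Y. S \<subseteq> e"
      "\<forall>H\<in>F. \<not> contains (hg_link S Y) H"
    using assms(5) by (auto simp: free_cone_def)
  have "S \<subseteq> fst Y" using S(3) \<open>e0 \<in> snd Y\<close> assms(3) by (auto simp: is_hypergraph_def)
  then have "card (fst (hg_link S Y)) = n"
    using assms(1,4) S(1,2) by (simp add: hg_link_def card_Diff_subset)
  moreover have "is_hypergraph l (hg_link S Y)"
    using is_hypergraph_link[OF assms(3) S(1,3)] S(2) assms(1) by simp
  ultimately show ?thesis
    using S(4) card_edges_link[OF S(3)] by (intro exI[of _ "hg_link S Y"]) simp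
qed

lemma free_cone_of_free:
  fixes X :: "nat hgraph"
  assumes "l \<le> k" and "is_hypergraph l X" and "card (fst X) = n"
    and "\<forall>G\<in>F. \<not> contains X G"
  shows "\<exists>Y :: nat hgraph. is_hypergraph k Y \<and> card (fst Y) = n + k - l \<and> free_cone k l F Y
    \<and> card (snd Y) = card (snd X)"
proof -
  have "finite (fst X)" using assms(2) by (simp add: is_hypergraph_def)
  then obtain S where S: "finite S" "card S = k - l" "fst X \<inter> S = {}"
    by (rule fresh_finite_set)
  have "is_hypergraph k (hg_cone S X)"
    using is_hypergraph_cone[OF assms(2) S(1,3)] S(2) assms(1) by simp
  moreover have "card (fst (hg_cone S X)) = n + k - l"
    using \<open>finite (fst X)\<close> S assms(1,3) by (simp add: hg_cone_def card_Un_disjoint)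
  moreover have "free_cone k l F (hg_cone S X)"
  proof -
    have "\<forall>e\<in>snd (hg_cone S X). S \<subseteq> e" by (auto simp: hg_cone_def)
    with S(1,2) assms(4) link_cone[OF assms(2) S(3)] show ?thesis
      unfolding free_cone_def by (intro exI[of _ S]) simp
  qed
  ultimately show ?thesis
    using card_edges_cone[OF assms(2) S(3)] by (intro exI[of _ "hg_cone S X"]) simp
qed

lemma free_cone_edge_counts:
  assumes "l < k" and "\<forall>H\<in>F. snd H \<noteq> {}"
  shows "{card (snd Y) | Y :: nat hgraph. is_hypergraph k Y \<and> card (fst Y) = n + k - l
            \<and> free_cone k l F Y}
    = {card (snd X) | X :: nat hgraph. is_hypergraph l X \<and> card (fst X) = n
            \<and> (\<forall>G\<in>F. \<not> contains X G)}"
  (is "?cones = ?free")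
proof (intro equalityI subsetI)
  fix m assume "m \<in> ?cones"
  then obtain Y :: "nat hgraph" where Y: "is_hypergraph k Y" "card (fst Y) = n + k - l"
      "free_cone k l F Y" "m = card (snd Y)"
    by blast
  obtain X :: "nat hgraph" where "is_hypergraph l X" "card (fst X) = n"
      "\<forall>G\<in>F. \<not> contains X G" "card (snd X) = card (snd Y)"
    using link_of_free_cone[OF assms Y(1-3)] by blast
  then show "m \<in> ?free" unfolding Y(4) by (intro CollectI exI[of _ X]) simp
next
  fix m assume "m \<in> ?free"
  then obtain X :: "nat hgraph" where X: "is_hypergraph l X" "card (fst X) = n"
      "\<forall>G\<in>F. \<not> contains X G" "m = card (snd X)"
    by blast
  obtain Y :: "nat hgraph" where "is_hypergraph k Y" "card (fst Y) = n + k - l"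
      "free_cone k l F Y" "card (snd Y) = card (snd X)"
    using free_cone_of_free[OF less_imp_le[OF assms(1)] X(1-3)] by blast
  then show "m \<in> ?cones" unfolding X(4) by (intro CollectI exI[of _ Y]) simp
qed

theorem lemma9:
  fixes l k :: nat and F :: "nat hgraph set"
  assumes "1 \<le> l" and "l < k"
    and "\<forall>G\<in>F. is_hypergraph l G"
    and "\<forall>G\<in>F. \<exists>e1\<in>snd G. \<exists>e2\<in>snd G. e1 \<inter> e2 = {}"
  shows "\<exists>F' :: nat hgraph set. (\<forall>G\<in>F'. is_hypergraph k G) \<and>
           (\<forall>n. ex (n + k - l) k F' = ex n l F)"
proof (intro exI[of _ "non_free_cones k l F"] conjI allI)
  have F: "\<forall>H\<in>F. snd H \<noteq> {}" using assms(4) by blast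
  show "\<forall>G\<in>non_free_cones k l F. is_hypergraph k G" by (simp add: non_free_cones_def)
  fix n
  have "{card (snd Y) | Y :: nat hgraph. is_hypergraph k Y \<and> card (fst Y) = n + k - l
            \<and> (\<forall>G\<in>non_free_cones k l F. \<not> contains Y G)}
      = {card (snd Y) | Y :: nat hgraph. is_hypergraph k Y \<and> card (fst Y) = n + k - l
            \<and> free_cone k l F Y}"
    using non_free_cones_free_iff[OF F] by blast
  also have "\<dots> = {card (snd X) | X :: nat hgraph. is_hypergraph l X \<and> card (fst X) = n
            \<and> (\<forall>G\<in>F. \<not> contains X G)}"
    using free_cone_edge_counts[OF assms(2) F] .
  finally show "ex (n + k - l) k (non_free_cones k l F) = ex n l F" unfolding ex_def by simp
qed

end
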